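(* For every dimension $d\ge 1$, $\theta^{\rm D}(1,d)=0$.
   Context: Fix integers $d\ge1$ and $1\le k\le 2d$. The directed $k$-neighbor graph ($k$-DnG) on $\mathbb{Z}^d$ is the random directed graph obtained by letting each vertex $x\in\mathbb{Z}^d$, independently of all other vertices, choose a uniformly random subset of exactly $k$ of its $2d$ nearest neighbors (in $\ell_1$-distance), and placing a directed edge from $x$ to each chosen neighbor. We write $\theta^{\rm D}(k,d)=\mathbb{P}(o\rightsquigarrow\infty \text{ in the $k$-DnG on }\mathbb{Z}^d)$, where $o$ is the origin and $o\rightsquigarrow\infty$ is the event that there is an infinite self-avoiding directed path along edges of the $k$-DnG starting at $o$ (equivalently, $o$ is connected by directed paths to vertices arbitrarily far away). *)

theory Defs
  imports "HOL-Analysis.Analysis" "HOL-Probability.Probability"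
begin

text \<open>Vertices of Z^d are vectors int^'d, where the finite type 'd indexes the
  d coordinates (so d = CARD('d) >= 1).  The 2d nearest neighbours of x are
  x + nbr_step (i, s): i a coordinate, s the sign (True = +1, False = -1).\<close>

definition nbr_step :: "'d::finite \<times> bool \<Rightarrow> int ^ 'd" where
  "nbr_step = (\<lambda>(i, s). (\<chi> j. if j = i then (if s then 1 else -1) else 0))"

definition choice_pmf :: "nat \<Rightarrow> ('d::finite \<times> bool) set pmf" where
  "choice_pmf k = pmf_of_set {S :: ('d \<times> bool) set. card S = k}"

text \<open>A configuration w assigns to each vertex x its chosen set w x of directions;
  the directed edges are x -> x + nbr_step e for e in w x.\<close>
definition dng_measure :: "nat \<Rightarrow> (int ^ 'd \<Rightarrow> ('d::finite \<times> bool) set) measure" where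
  "dng_measure k = PiM UNIV (\<lambda>_. measure_pmf (choice_pmf k))"

definition reaches_infinity :: "(int ^ 'd \<Rightarrow> ('d::finite \<times> bool) set) set" where
  "reaches_infinity = {w. \<exists>p :: nat \<Rightarrow> int ^ 'd. p 0 = 0 \<and> inj p \<and>
       (\<forall>n. \<exists>e \<in> w (p n). p (Suc n) = p n + nbr_step e)}"

end

theory Submission
  imports Defs
begin

(* A self-avoiding path of n + 1 steps from the origin never reverses a step, so it is one of at
   most 2d (2d - 1)^n direction sequences; since it visits distinct vertices, the independent
   choices in the 1-DnG make each of them present with probability (2d)^-(n + 1).  Hence
   P(o ~> oo) <= (1 - 1/(2d))^n for every n.  The event o ~> oo is measurable because, by
   Koenig's lemma, it is the intersection over n of the events that some self-avoiding path of
   length n starts at o, each a finite union of cylinder sets. *)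

lemma koenig_prefix_closed:
  fixes P :: "'a::finite list \<Rightarrow> bool"
  assumes prefix_closed: "\<And>xs ys. P (xs @ ys) \<Longrightarrow> P xs"
    and arbitrarily_long: "\<And>n. \<exists>xs. length xs = n \<and> P xs"
  shows "\<exists>f. \<forall>n. P (map f [0..<n])"
proof -
  define extendable where "extendable xs \<longleftrightarrow> (\<forall>m. \<exists>ys. length ys = m \<and> P (xs @ ys))" for xs
  have extend: "\<exists>x. extendable (xs @ [x])" if ext: "extendable xs" for xs
  \<comment> \<open>otherwise each letter x bounds the extensions of xs @ [x] by some m x, and the finitely
    many bounds contradict an extension of length Suc (Max (range m))\<close>
  proof (rule ccontr)
    assume "\<nexists>x. extendable (xs @ [x])"
    then have "\<forall>x. \<exists>m. \<forall>ys. length ys = m \<longrightarrow> \<not> P (xs @ x # ys)"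
      by (auto simp: extendable_def)
    then obtain m where m: "\<And>x ys. length ys = m x \<Longrightarrow> \<not> P (xs @ x # ys)"
      by metis
    define M where "M = Max (range m)"
    obtain ys where "length ys = Suc M" "P (xs @ ys)"
      using ext by (auto simp: extendable_def)
    then obtain x zs where zs: "length zs = M" "P (xs @ x # zs)"
      by (cases ys) auto
    have "m x \<le> M"
      unfolding M_def by (rule Max_ge) auto
    then have "P (xs @ x # take (m x) zs)"
      using prefix_closed[of "xs @ x # take (m x) zs" "drop (m x) zs"] zs by simp
    with m show False
      using \<open>m x \<le> M\<close> zs(1) by simp
  qed
  define branch where "branch = rec_nat [] (\<lambda>_ xs. xs @ [SOME x. extendable (xs @ [x])])"
  have branch_0: "branch 0 = []"
    and branch_Suc: "branch (Suc n) = branch n @ [SOME x. extendable (branch n @ [x])]" for n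
    by (simp_all add: branch_def)
  have extendable_branch: "extendable (branch n)" for n
  proof (induction n)
    case 0
    show ?case
      using arbitrarily_long by (simp add: branch_0 extendable_def)
  next
    case (Suc n)
    show ?case
      unfolding branch_Suc using someI_ex[OF extend[OF Suc.IH]] .
  qed
  have "map (\<lambda>n. last (branch (Suc n))) [0..<n] = branch n" for n
    by (induction n) (simp_all add: branch_0 branch_Suc)
  moreover have "P (branch n)" for n
    using extendable_branch[of n] by (auto simp: extendable_def dest: prefix_closed)
  ultimately show ?thesis
    by metis
qed

definition walk :: "('d::finite \<times> bool) list \<Rightarrow> nat \<Rightarrow> int ^ 'd" where
  "walk es i = sum_list (map nbr_step (take i es))"

definition self_avoiding :: "('d::finite \<times> bool) list \<Rightarrow> bool" where
  "self_avoiding es \<longleftrightarrow> inj_on (walk es) {..length es}"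

definition path_cylinder :: "('d::finite \<times> bool) list \<Rightarrow> (int ^ 'd \<Rightarrow> ('d \<times> bool) set) set" where
  "path_cylinder es = {w. \<forall>i<length es. es ! i \<in> w (walk es i)}"

definition sa_path_event :: "nat \<Rightarrow> (int ^ 'd \<Rightarrow> ('d::finite \<times> bool) set) set" where
  "sa_path_event n = (\<Union>es \<in> {es. length es = n \<and> self_avoiding es}. path_cylinder es)"

lemma walk_0 [simp]: "walk es 0 = 0"
  by (simp add: walk_def)

lemma walk_Suc: "i < length es \<Longrightarrow> walk es (Suc i) = walk es i + nbr_step (es ! i)"
  by (simp add: walk_def take_Suc_conv_app_nth)

lemma walk_append: "i \<le> length es \<Longrightarrow> walk (es @ fs) i = walk es i"
  by (simp add: walk_def)

lemma walk_map_upt: "i \<le> n \<Longrightarrow> walk (map f [0..<n]) i = walk (map f [0..<i]) i"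
  by (simp add: walk_def take_map)

lemma walk_map_upt_Suc: "walk (map f [0..<Suc n]) (Suc n) = walk (map f [0..<n]) n + nbr_step (f n)"
  by (simp add: walk_def)

lemma self_avoiding_appendD: "self_avoiding (es @ fs) \<Longrightarrow> self_avoiding es"
proof -
  assume "self_avoiding (es @ fs)"
  then have "inj_on (walk (es @ fs)) {..length es}"
    unfolding self_avoiding_def by (rule inj_on_subset) auto
  then show ?thesis
    unfolding self_avoiding_def by (rule inj_on_cong[THEN iffD1, rotated]) (simp add: walk_append)
qed

lemma path_cylinder_appendD:
  assumes "w \<in> path_cylinder (es @ fs)"
  shows "w \<in> path_cylinder es"
  unfolding path_cylinder_def
proof (intro CollectI allI impI)
  fix i
  assume "i < length es"
  moreover have "(es @ fs) ! i \<in> w (walk (es @ fs) i)"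
    using assms \<open>i < length es\<close> by (simp add: path_cylinder_def)
  ultimately show "es ! i \<in> w (walk es i)"
    by (simp add: nth_append walk_append)
qed

lemma reaches_infinity_subset_sa_path_event: "reaches_infinity \<subseteq> sa_path_event n"
proof
  fix w
  assume "w \<in> reaches_infinity"
  then obtain p where "p 0 = 0" "inj p" and "\<forall>n. \<exists>e \<in> w (p n). p (Suc n) = p n + nbr_step e"
    unfolding reaches_infinity_def by blast
  then obtain f where f: "\<And>i. f i \<in> w (p i)" "\<And>i. p (Suc i) = p i + nbr_step (f i)"
    by metis
  have walk_prefix: "walk (map f [0..<i]) i = p i" for i
    by (induction i) (simp_all add: \<open>p 0 = 0\<close> walk_map_upt_Suc f(2) del: upt_Suc)
  have walk_f: "walk (map f [0..<n]) i = p i" if "i \<le> n" for i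
    by (simp only: walk_map_upt[OF that] walk_prefix)
  have "self_avoiding (map f [0..<n])"
    using \<open>inj p\<close> by (auto simp: self_avoiding_def inj_on_def walk_f dest: injD)
  moreover have "w \<in> path_cylinder (map f [0..<n])"
    using f(1) by (simp add: path_cylinder_def walk_f)
  ultimately show "w \<in> sa_path_event n"
    unfolding sa_path_event_def by force
qed

lemma INT_sa_path_event_subset_reaches_infinity: "(\<Inter>n. sa_path_event n) \<subseteq> reaches_infinity"
proof
  fix w
  assume "w \<in> (\<Inter>n. sa_path_event n)"
  then have "\<exists>es. length es = n \<and> self_avoiding es \<and> w \<in> path_cylinder es" for n
    by (auto simp: sa_path_event_def)
  then have "\<exists>f. \<forall>n. self_avoiding (map f [0..<n]) \<and> w \<in> path_cylinder (map f [0..<n])"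
    by (intro koenig_prefix_closed) (auto dest: self_avoiding_appendD path_cylinder_appendD)
  then obtain f where sa: "\<And>n. self_avoiding (map f [0..<n])"
    and cyl: "\<And>n. w \<in> path_cylinder (map f [0..<n])"
    by blast
  define p where "p n = walk (map f [0..<n]) n" for n
  have walk_f: "walk (map f [0..<n]) i = p i" if "i \<le> n" for i n
    unfolding p_def by (rule walk_map_upt[OF that])
  have "inj p"
  proof (rule injI)
    fix a b
    assume "p a = p b"
    then have "walk (map f [0..<max a b]) a = walk (map f [0..<max a b]) b"
      by (simp add: walk_f)
    moreover have "inj_on (walk (map f [0..<max a b])) {..max a b}"
      using sa[of "max a b"] by (simp add: self_avoiding_def)
    ultimately show "a = b"
      by (metis atMost_iff inj_onD max.cobounded1 max.cobounded2)
  qed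
  moreover have "f n \<in> w (p n)" for n
  proof -
    have "map f [0..<Suc n] ! n \<in> w (walk (map f [0..<Suc n]) n)"
      using cyl[of "Suc n"] unfolding path_cylinder_def by (simp del: upt_Suc)
    then show ?thesis
      using walk_f[of n "Suc n"] by (simp del: upt_Suc)
  qed
  moreover have "p (Suc n) = p n + nbr_step (f n)" for n
    unfolding p_def by (rule walk_map_upt_Suc)
  moreover have "p 0 = 0"
    by (simp add: p_def)
  ultimately show "w \<in> reaches_infinity"
    unfolding reaches_infinity_def by blast
qed

lemma reaches_infinity_eq_INT_sa_path_event: "reaches_infinity = (\<Inter>n. sa_path_event n)"
  using reaches_infinity_subset_sa_path_event INT_sa_path_event_subset_reaches_infinity by blast

definition opposite :: "'d \<times> bool \<Rightarrow> 'd \<times> bool" where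
  "opposite = (\<lambda>(i, s). (i, \<not> s))"

lemma nbr_step_opposite: "nbr_step (opposite e) = - nbr_step (e :: 'd::finite \<times> bool)"
  by (cases e) (simp add: vec_eq_iff nbr_step_def opposite_def)

lemma self_avoiding_non_backtracking:
  assumes "self_avoiding es"
  shows "successively (\<lambda>e e'. e' \<noteq> opposite e) es"
  unfolding successively_conv_nth
proof (intro allI impI notI)
  fix i
  assume i: "Suc i < length es" and backtrack: "es ! Suc i = opposite (es ! i)"
  have inj: "inj_on (walk es) {..length es}"
    using assms by (simp add: self_avoiding_def)
  have "walk es (Suc (Suc i)) = walk es i"
    using i backtrack by (simp add: walk_Suc nbr_step_opposite)
  then have "Suc (Suc i) = i"
    by (rule inj_onD[OF inj]) (use i in auto)
  then show False
    by simp
qed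

lemma card_successively_Cons_le:
  fixes f :: "'a::finite \<Rightarrow> 'a"
  shows "card {xs. length xs = n \<and> successively (\<lambda>x y. y \<noteq> f x) (x # xs)} \<le> (CARD('a) - 1) ^ n"
proof (induction n arbitrary: x)
  case 0
  have "{xs. length xs = 0 \<and> successively (\<lambda>x y. y \<noteq> f x) (x # xs)} = {[]}"
    by auto
  then show ?case
    by simp
next
  case (Suc n)
  let ?A = "\<lambda>x. {xs. length xs = n \<and> successively (\<lambda>x y. y \<noteq> f x) (x # xs)}"
  have "{xs. length xs = Suc n \<and> successively (\<lambda>x y. y \<noteq> f x) (x # xs)}
      = (\<Union>y \<in> UNIV - {f x}. (#) y ` ?A y)"
    by (auto simp: length_Suc_conv)
  then have "card {xs. length xs = Suc n \<and> successively (\<lambda>x y. y \<noteq> f x) (x # xs)}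
      \<le> (\<Sum>y \<in> UNIV - {f x}. card ((#) y ` ?A y))"
    by (simp add: card_UN_le)
  also have "\<dots> \<le> (\<Sum>y \<in> UNIV - {f x}. (CARD('a) - 1) ^ n)"
    unfolding card_image[OF inj_on_Cons1] by (intro sum_mono Suc.IH)
  also have "\<dots> = (CARD('a) - 1) ^ Suc n"
    by (simp add: card_Diff_singleton)
  finally show ?case .
qed

lemma card_successively_le:
  fixes f :: "'a::finite \<Rightarrow> 'a"
  shows "card {xs. length xs = Suc n \<and> successively (\<lambda>x y. y \<noteq> f x) xs} \<le> CARD('a) * (CARD('a) - 1) ^ n"
proof -
  let ?A = "\<lambda>x. {xs. length xs = n \<and> successively (\<lambda>x y. y \<noteq> f x) (x # xs)}"
  have "{xs. length xs = Suc n \<and> successively (\<lambda>x y. y \<noteq> f x) xs} = (\<Union>x. (#) x ` ?A x)"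
    by (auto simp: length_Suc_conv)
  then have "card {xs. length xs = Suc n \<and> successively (\<lambda>x y. y \<noteq> f x) xs}
      \<le> (\<Sum>x \<in> UNIV. card ((#) x ` ?A x))"
    by (simp add: card_UN_le)
  also have "\<dots> \<le> (\<Sum>x \<in> (UNIV :: 'a set). (CARD('a) - 1) ^ n)"
    unfolding card_image[OF inj_on_Cons1] by (rule sum_mono) (rule card_successively_Cons_le)
  also have "\<dots> = CARD('a) * (CARD('a) - 1) ^ n"
    by simp
  finally show ?thesis .
qed

lemma finite_self_avoiding: "finite {es :: ('d::finite \<times> bool) list. length es = n \<and> self_avoiding es}"
  using finite_lists_length_eq[of "UNIV :: ('d \<times> bool) set" n] by (rule finite_subset[rotated]) auto

lemma card_self_avoiding_le:
  "card {es :: ('d::finite \<times> bool) list. length es = Suc n \<and> self_avoiding es}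
     \<le> CARD('d \<times> bool) * (CARD('d \<times> bool) - 1) ^ n"
proof -
  have "{es :: ('d \<times> bool) list. length es = Suc n \<and> self_avoiding es}
      \<subseteq> {es. length es = Suc n \<and> successively (\<lambda>e e'. e' \<noteq> opposite e) es}"
    by (auto intro: self_avoiding_non_backtracking)
  moreover have "finite {es :: ('d \<times> bool) list. length es = Suc n \<and> successively (\<lambda>e e'. e' \<noteq> opposite e) es}"
    using finite_lists_length_eq[of "UNIV :: ('d \<times> bool) set" "Suc n"] by (rule finite_subset[rotated]) auto
  ultimately show ?thesis
    by (rule order_trans[OF card_mono[rotated] card_successively_le])
qed

lemma injective_cylinder_eq_prod_emb:
  fixes v :: "nat \<Rightarrow> 'i"
  assumes "inj_on v {..<n}"
  shows "{w \<in> space (PiM I M). \<forall>k<n. w (v k) \<in> A k}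
    = prod_emb I M (v ` {..<n}) (PiE (v ` {..<n}) (\<lambda>j. A (the_inv_into {..<n} v j)))"
  unfolding prod_emb_def space_PiM
  using assms by (auto simp: restrict_PiE_iff Pi_iff the_inv_into_f_f)

lemma sets_PiM_injective_cylinder:
  fixes v :: "nat \<Rightarrow> 'i"
  assumes "inj_on v {..<n}" "v ` {..<n} \<subseteq> I" "\<And>k. k < n \<Longrightarrow> A k \<in> sets (M (v k))"
  shows "{w \<in> space (PiM I M). \<forall>k<n. w (v k) \<in> A k} \<in> sets (PiM I M)"
  unfolding injective_cylinder_eq_prod_emb[OF assms(1)]
  by (rule sets_PiM_I) (use assms in \<open>auto simp: the_inv_into_f_f finite_imageI\<close>)

lemma emeasure_PiM_injective_cylinder:
  fixes v :: "nat \<Rightarrow> 'i"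
  assumes "\<And>i. i \<in> I \<Longrightarrow> prob_space (M i)"
    and "inj_on v {..<n}" "v ` {..<n} \<subseteq> I" "\<And>k. k < n \<Longrightarrow> A k \<in> sets (M (v k))"
  shows "emeasure (PiM I M) {w \<in> space (PiM I M). \<forall>k<n. w (v k) \<in> A k}
    = (\<Prod>k<n. emeasure (M (v k)) (A k))"
proof -
  have "emeasure (PiM I M) {w \<in> space (PiM I M). \<forall>k<n. w (v k) \<in> A k}
      = (\<Prod>j \<in> v ` {..<n}. emeasure (M j) (A (the_inv_into {..<n} v j)))"
    unfolding injective_cylinder_eq_prod_emb[OF assms(2)]
    by (rule emeasure_PiM_emb) (use assms in \<open>auto simp: the_inv_into_f_f finite_imageI\<close>)
  also have "\<dots> = (\<Prod>k<n. emeasure (M (v k)) (A k))"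
    using assms(2) by (simp add: prod.reindex the_inv_into_f_f)
  finally show ?thesis .
qed

lemma prob_space_dng_measure: "prob_space (dng_measure k)"
  unfolding dng_measure_def by (intro prob_space_PiM prob_space_measure_pmf)

lemma path_cylinder_eq_coordinates:
  "path_cylinder es
    = {w \<in> space (dng_measure k). \<forall>i<length es. w (walk es i) \<in> {S. es ! i \<in> S}}"
  by (simp add: path_cylinder_def dng_measure_def space_PiM)

lemma inj_on_walk_lessThan: "self_avoiding es \<Longrightarrow> inj_on (walk es) {..<length es}"
  unfolding self_avoiding_def by (rule inj_on_subset) auto

lemma sets_path_cylinder: "self_avoiding es \<Longrightarrow> path_cylinder es \<in> sets (dng_measure k)"
  unfolding path_cylinder_eq_coordinates[where k = k] dng_measure_def
  by (intro sets_PiM_injective_cylinder inj_on_walk_lessThan) auto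

lemma sets_sa_path_event: "sa_path_event n \<in> sets (dng_measure k)"
  unfolding sa_path_event_def
  by (intro sets.finite_UN finite_self_avoiding) (auto intro: sets_path_cylinder)

lemma sets_reaches_infinity: "reaches_infinity \<in> sets (dng_measure k)"
  unfolding reaches_infinity_eq_INT_sa_path_event
  by (intro sets.countable_INT) (auto intro: sets_sa_path_event)

lemma emeasure_choice_pmf_1_contains:
  fixes e :: "'d::finite \<times> bool"
  shows "emeasure (measure_pmf (choice_pmf 1)) {S. e \<in> S} = ennreal (1 / CARD('d \<times> bool))"
proof -
  let ?A = "{S :: ('d \<times> bool) set. card S = 1}"
  have "?A = range (\<lambda>e. {e})"
    by (auto simp: card_1_singleton_iff)
  then have "card ?A = CARD('d \<times> bool)"
    by (simp add: card_image)
  moreover have "?A \<inter> {S. e \<in> S} = {{e}}"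
    by (auto simp: card_1_singleton_iff)
  moreover have "?A \<noteq> {}"
    by (auto intro: exI[of _ "{e}"])
  ultimately show ?thesis
    by (simp add: choice_pmf_def emeasure_pmf_of_set divide_ennreal ennreal_of_nat_eq_real_of_nat)
qed

lemma emeasure_path_cylinder:
  fixes es :: "('d::finite \<times> bool) list"
  assumes "self_avoiding es"
  shows "emeasure (dng_measure 1) (path_cylinder es) = ennreal ((1 / CARD('d \<times> bool)) ^ length es)"
proof -
  have "emeasure (dng_measure 1) (path_cylinder es)
      = (\<Prod>i<length es. emeasure (measure_pmf (choice_pmf 1)) {S. es ! i \<in> S})"
    unfolding path_cylinder_eq_coordinates[where k = 1] dng_measure_def
    using assms by (intro emeasure_PiM_injective_cylinder inj_on_walk_lessThan prob_space_measure_pmf) auto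
  also have "\<dots> = ennreal ((1 / CARD('d \<times> bool)) ^ length es)"
    unfolding emeasure_choice_pmf_1_contains by (simp add: prod_ennreal ennreal_power)
  finally show ?thesis .
qed

lemma measure_sa_path_event_le:
  "measure (dng_measure 1) (sa_path_event (Suc n) :: (int ^ 'd::finite \<Rightarrow> ('d \<times> bool) set) set)
    \<le> (1 - 1 / CARD('d \<times> bool)) ^ n"
proof -
  let ?P = "dng_measure 1 :: (int ^ 'd \<Rightarrow> ('d \<times> bool) set) measure"
  let ?N = "CARD('d \<times> bool)"
  let ?W = "{es :: ('d \<times> bool) list. length es = Suc n \<and> self_avoiding es}"
  interpret prob_space ?P
    by (rule prob_space_dng_measure)
  have measure_cylinder: "measure ?P (path_cylinder es) = (1 / ?N) ^ Suc n" if "es \<in> ?W" for es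
  proof -
    have "self_avoiding es" "length es = Suc n"
      using that by auto
    \<comment> \<open>rewrite before simp, which turns dng_measure 1 into dng_measure (Suc 0)\<close>
    then show ?thesis
      unfolding measure_def by (simp only: emeasure_path_cylinder) simp
  qed
  have "measure ?P (sa_path_event (Suc n)) \<le> (\<Sum>es \<in> ?W. measure ?P (path_cylinder es))"
    unfolding sa_path_event_def
    by (rule finite_measure_subadditive_finite) (auto intro: finite_self_avoiding sets_path_cylinder)
  also have "\<dots> = card ?W * (1 / ?N) ^ Suc n"
    by (subst sum.cong[OF refl measure_cylinder]) simp_all
  also have "\<dots> \<le> ?N * (?N - 1) ^ n * (1 / ?N) ^ Suc n"
    using card_self_avoiding_le[where 'd = 'd and n = n]
    by (intro mult_right_mono) (simp_all only: of_nat_le_iff, simp)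
  also have "\<dots> = (1 - 1 / ?N) ^ n"
    by (simp add: of_nat_diff field_simps power_divide)
  finally show ?thesis .
qed

theorem lemma2p1:
  shows "reaches_infinity \<in> null_sets (dng_measure 1 :: (int ^ 'd::finite \<Rightarrow> ('d \<times> bool) set) measure)"
proof -
  let ?P = "dng_measure 1 :: (int ^ 'd \<Rightarrow> ('d \<times> bool) set) measure"
  let ?q = "1 - 1 / real CARD('d \<times> bool)"
  interpret prob_space ?P
    by (rule prob_space_dng_measure)
  have "measure ?P reaches_infinity \<le> ?q ^ n" for n
  proof -
    have "measure ?P reaches_infinity \<le> measure ?P (sa_path_event (Suc n))"
      by (rule finite_measure_mono[OF reaches_infinity_subset_sa_path_event sets_sa_path_event])
    also have "\<dots> \<le> ?q ^ n"
      by (rule measure_sa_path_event_le)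
    finally show ?thesis .
  qed
  moreover have "(\<lambda>n. ?q ^ n) \<longlonglongrightarrow> 0"
  proof (rule LIMSEQ_power_zero)
    have "0 < CARD('d \<times> bool)"
      by simp
    then have "1 \<le> real CARD('d \<times> bool)"
      by (metis Suc_leI of_nat_1 of_nat_le_iff One_nat_def)
    then have "0 < 1 / real CARD('d \<times> bool)" "1 / real CARD('d \<times> bool) \<le> 1"
      by auto
    then show "norm ?q < 1"
      unfolding real_norm_def abs_less_iff by linarith
  qed
  ultimately have "measure ?P reaches_infinity \<le> 0"
    by (intro LIMSEQ_le_const[where X = "\<lambda>n. ?q ^ n"]) auto
  then have "measure ?P reaches_infinity = 0"
    using measure_nonneg[of ?P reaches_infinity] by linarith
  then have "emeasure ?P reaches_infinity = 0"
    unfolding emeasure_eq_measure by simp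
  then show ?thesis
    using sets_reaches_infinity by (rule null_setsI)
qed

end
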